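(* Let $J\ge 2$ be an integer (the number of reflecting surfaces, indexed $1,\dots,J$), and let $N_p, N_a$ be positive integers and $P_t, P_a, M, \kappa_B, \kappa_U, \kappa_I, \sigma^2$ be positive reals with $N_p\kappa_I<1$, i.e. $N_p<\kappa_I^{-1}$. Set $C_a = P_a N_a \kappa_U^2$ and $C_t = P_t M \kappa_B^2$, and for $l\in\{1,\dots,J\}$ define $$\gamma(l)=\frac{C_aC_tN_a(N_p\kappa_I)^{2(J-1)}}{\sigma^2C_a(N_p\kappa_I)^{2(J-l)}+\sigma^2\big(C_t(N_p\kappa_I)^{2(l-1)}+\sigma^2\big)}.$$ Let $\tilde l=\frac{J+1}{2}+\frac{\log(C_a/C_t)}{2\log(N_p^2\kappa_I^2)}$. Then an optimal solution $l_1^\star$ of $\max_{l\in\{1,\dots,J\}}\gamma(l)$ is given as follows. (I) If $C_a<C_t$: $l_1^\star=\arg\max_{l\in\{\lfloor\tilde l\rfloor,\lceil\tilde l\rceil\}}\gamma(l)$ if $N_p<(C_a/C_t)^{\frac{1}{2(J-1)}}\kappa_I^{-1}$, and $l_1^\star=J$ if $(C_a/C_t)^{\frac{1}{2(J-1)}}\kappa_I^{-1}\le N_p<\kappa_I^{-1}$. (II) If $C_a=C_t$: $l_1^\star=\arg\max_{l\in\{\lfloor\frac{J+1}{2}\rfloor,\lceil\frac{J+1}{2}\rceil\}}\gamma(l)$. (III) If $C_a>C_t$: $l_1^\star=\arg\max_{l\in\{\lfloor\tilde l\rfloor,\lceil\tilde l\rceil\}}\gamma(l)$ if $N_p<(C_t/C_a)^{\frac{1}{2(J-1)}}\kappa_I^{-1}$,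 and $l_1^\star=1$ if $(C_t/C_a)^{\frac{1}{2(J-1)}}\kappa_I^{-1}\le N_p<\kappa_I^{-1}$.
   Context: Physical setting (for interpretation): an $M$-antenna base station with transmit power $P_t$ sends information to a single-antenna user over a cascaded line-of-sight path through $J$ intelligent reflecting surfaces (IRSs) numbered $1,\dots,J$ in order from the base station; IRS $l$ is active (with $N_a$ elements, per-element amplification power limit $P_a$) and the others are passive (with $N_p$ elements each). $\kappa_B,\kappa_I,\kappa_U$ are the amplitude path gains of the base station–IRS 1 link, each inter-IRS link, and the IRS $J$–user link; $\sigma^2$ is the noise power (both amplification noise per active element and receiver noise). With optimal beamforming, the user's received SNR as a function of the active IRS index $l$ is $\gamma(l)$ above. Standing assumption: $N_p\kappa_I<1$ (the cascaded passive gain decreases with each reflection). $\lfloor\cdot\rfloor,\lceil\cdot\rceil$ are floor and ceiling. *)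

theory Defs
  imports Complex_Main
begin

text \<open>Received SNR when IRS number l (1 <= l <= J) is the active one;
  Ca = Pa Na kU^2, Ct = Pt M kB^2, x = Np kI.\<close>
definition snr_gamma :: "nat \<Rightarrow> real \<Rightarrow> real \<Rightarrow> real \<Rightarrow> real \<Rightarrow> real \<Rightarrow> nat \<Rightarrow> real" where
  "snr_gamma J Na x Ca Ct \<sigma>2 l =
     (Ca * Ct * Na * x ^ (2 * (J - 1))) /
     (\<sigma>2 * Ca * x ^ (2 * (J - l)) + \<sigma>2 * (Ct * x ^ (2 * (l - 1)) + \<sigma>2))"

definition is_opt :: "(nat \<Rightarrow> real) \<Rightarrow> nat set \<Rightarrow> nat \<Rightarrow> bool" where
  "is_opt f S l \<longleftrightarrow> l \<in> S \<and> (\<forall>l'\<in>S. f l' \<le> f l)"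

end

theory Submission
  imports Defs
begin

text \<open>Write q = (Np kI)^2, so 0 < q < 1. Up to the factor sigma2, the denominator of gamma(l) is
  Ca q^(J-l) + Ct q^(l-1) + sigma2, and going from l to l + 1 changes it by
  (1 - q) (Ca q^(J-l-1) - Ct q^(l-1)). Comparing the two powers through logarithms shows that
  gamma increases from l to l + 1 exactly when l + 1/2 lies below the real number lt, so gamma is
  unimodal on {1..J}. Its maximum is therefore attained at floor lt or ceiling lt when
  1 <= lt <= J, at J when lt >= J and at 1 when lt <= 1; the thresholds on Np in cases (I) and
  (III) are exactly the conditions lt >= J and lt <= 1.\<close>

lemma lift_Suc_mono_le_on:
  fixes g :: "nat \<Rightarrow> 'a::order"
  assumes "\<And>l. a \<le> l \<Longrightarrow> l < b \<Longrightarrow> g l \<le> g (Suc l)" and "a \<le> b"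
  shows "g a \<le> g b"
  using assms(2,1)
proof (induction b rule: dec_induct)
  case (step n)
  then show ?case by (meson order_trans less_Suc_eq)
qed simp

lemma lift_Suc_antimono_le_on:
  fixes g :: "nat \<Rightarrow> 'a::order"
  assumes "\<And>l. a \<le> l \<Longrightarrow> l < b \<Longrightarrow> g (Suc l) \<le> g l" and "a \<le> b"
  shows "g b \<le> g a"
  using assms(2,1)
proof (induction b rule: dec_induct)
  case (step n)
  then show ?case by (meson order_trans less_Suc_eq)
qed simp

definition unimodal_peak :: "(nat \<Rightarrow> real) \<Rightarrow> nat \<Rightarrow> real \<Rightarrow> bool" where
  "unimodal_peak g J t \<longleftrightarrow> (\<forall>l. 1 \<le> l \<longrightarrow> l < J \<longrightarrow>
     (real l + 1/2 \<le> t \<longrightarrow> g l \<le> g (Suc l)) \<and> (t \<le> real l + 1/2 \<longrightarrow> g (Suc l) \<le> g l))"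

lemma unimodal_peakD:
  assumes "unimodal_peak g J t" "1 \<le> l" "l < J"
  shows "real l + 1/2 \<le> t \<Longrightarrow> g l \<le> g (Suc l)"
    and "t \<le> real l + 1/2 \<Longrightarrow> g (Suc l) \<le> g l"
  using assms unfolding unimodal_peak_def by blast+

lemma unimodal_peak_is_opt_floor_ceiling:
  assumes peak: "unimodal_peak g J t" and t: "1 \<le> t" "t \<le> real J"
    and opt: "is_opt g {nat \<lfloor>t\<rfloor>, nat \<lceil>t\<rceil>} l0"
  shows "is_opt g {1..J} l0"
proof -
  define a where "a = nat \<lfloor>t\<rfloor>"
  define b where "b = nat \<lceil>t\<rceil>"
  have a: "1 \<le> a" "a \<le> J" "real a \<le> t" and b: "1 \<le> b" "b \<le> J" "t \<le> real b"
    using t unfolding a_def b_def by linarith+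
  have "b \<le> a + 1"
    using ceiling_diff_floor_le_1[of t] t unfolding a_def b_def by linarith
  have l0: "l0 \<in> {1..J}" and "g a \<le> g l0" "g b \<le> g l0"
    using opt a b unfolding is_opt_def a_def[symmetric] b_def[symmetric] by auto
  moreover have "g l \<le> g l0" if l: "l \<in> {1..J}" for l
  proof (cases "l \<le> a")
    case True
    have "g l \<le> g a"
      using l a by (intro lift_Suc_mono_le_on[OF _ True] unimodal_peakD(1)[OF peak]) auto
    then show ?thesis using \<open>g a \<le> g l0\<close> by linarith
  next
    case False
    then have "b \<le> l" using \<open>b \<le> a + 1\<close> by linarith
    have "g l \<le> g b"
      using l b by (intro lift_Suc_antimono_le_on[OF _ \<open>b \<le> l\<close>] unimodal_peakD(2)[OF peak]) auto
    then show ?thesis using \<open>g b \<le> g l0\<close> by linarith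
  qed
  ultimately show ?thesis unfolding is_opt_def by blast
qed

lemma unimodal_peak_is_opt_last:
  assumes "unimodal_peak g J t" "real J \<le> t" "1 \<le> J"
  shows "is_opt g {1..J} J"
  unfolding is_opt_def
proof (intro conjI ballI)
  show "J \<in> {1..J}" using assms(3) by simp
  fix l assume l: "l \<in> {1..J}"
  show "g l \<le> g J"
  proof (rule lift_Suc_mono_le_on)
    fix k assume "l \<le> k" "k < J"
    then show "g k \<le> g (Suc k)"
      using l assms by (intro unimodal_peakD(1)[OF assms(1)]) auto
  qed (use l in auto)
qed

lemma unimodal_peak_is_opt_first:
  assumes "unimodal_peak g J t" "t \<le> 1" "1 \<le> J"
  shows "is_opt g {1..J} 1"
  unfolding is_opt_def
proof (intro conjI ballI)
  show "1 \<in> {1..J}" using assms(3) by simp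
  fix l assume l: "l \<in> {1..J}"
  show "g l \<le> g 1"
  proof (rule lift_Suc_antimono_le_on)
    fix k assume "1 \<le> k" "k < l"
    then show "g (Suc k) \<le> g k"
      using l assms by (intro unimodal_peakD(2)[OF assms(1)]) auto
  qed (use l in auto)
qed

lemma mult_power_le_iff_ln:
  fixes c d q :: real
  assumes "0 < c" "0 < d" "0 < q"
  shows "c * q ^ a \<le> d * q ^ b \<longleftrightarrow> ln c + real a * ln q \<le> ln d + real b * ln q"
proof -
  have "c * q ^ a \<le> d * q ^ b \<longleftrightarrow> ln (c * q ^ a) \<le> ln (d * q ^ b)"
    using assms by simp
  then show ?thesis using assms by (simp add: ln_mult_pos ln_realpow)
qed

lemma powr_inverse_div_le_iff:
  fixes n k r c :: real
  assumes "0 < n" "0 < k" "0 < r" "0 < c"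
  shows "r powr (1 / c) / k \<le> n \<longleftrightarrow> ln r \<le> c * ln (n * k)"
proof -
  have "r powr (1 / c) / k \<le> n \<longleftrightarrow> r powr (1 / c) \<le> n * k"
    using assms by (simp add: divide_le_eq)
  also have "\<dots> \<longleftrightarrow> ln r / c \<le> ln (n * k)"
    using assms by (subst ln_le_cancel_iff[symmetric]) (auto simp: ln_powr)
  finally show ?thesis using assms by (simp add: divide_le_eq mult.commute)
qed

definition snr_denom :: "nat \<Rightarrow> real \<Rightarrow> real \<Rightarrow> real \<Rightarrow> real \<Rightarrow> nat \<Rightarrow> real" where
  "snr_denom J q Ca Ct \<sigma>2 l = \<sigma>2 * Ca * q ^ (J - l) + \<sigma>2 * (Ct * q ^ (l - 1) + \<sigma>2)"

lemma snr_gamma_le_iff_snr_denom: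
  assumes "x \<noteq> 0" "Ca > 0" "Ct > 0" "Na > 0" "\<sigma>2 > 0"
  shows "snr_gamma J Na x Ca Ct \<sigma>2 a \<le> snr_gamma J Na x Ca Ct \<sigma>2 b \<longleftrightarrow>
    snr_denom J (x\<^sup>2) Ca Ct \<sigma>2 b \<le> snr_denom J (x\<^sup>2) Ca Ct \<sigma>2 a"
proof -
  define K where "K = Ca * Ct * Na * x ^ (2 * (J - 1))"
  have K: "K > 0"
    unfolding K_def using assms by (simp add: power_mult)
  have denom_pos: "snr_denom J (x\<^sup>2) Ca Ct \<sigma>2 l > 0" for l
    unfolding snr_denom_def using assms by (intro add_pos_nonneg add_pos_pos) auto
  have gamma: "snr_gamma J Na x Ca Ct \<sigma>2 l = K / snr_denom J (x\<^sup>2) Ca Ct \<sigma>2 l" for l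
    unfolding snr_gamma_def snr_denom_def K_def by (simp add: power_mult)
  show ?thesis
    unfolding gamma using K denom_pos[of a] denom_pos[of b]
    by (simp add: divide_le_eq le_divide_eq)
qed

lemma snr_denom_diff_Suc:
  assumes "1 \<le> l" "l < J"
  shows "snr_denom J q Ca Ct \<sigma>2 l - snr_denom J q Ca Ct \<sigma>2 (Suc l) =
    \<sigma>2 * (1 - q) * (Ct * q ^ (l - 1) - Ca * q ^ (J - Suc l))"
proof -
  have exps: "J - l = Suc (J - Suc l)" "Suc l - 1 = Suc (l - 1)"
    using assms by simp_all
  show ?thesis unfolding snr_denom_def exps by (simp add: algebra_simps)
qed

lemma snr_gamma_step_le_iff:
  assumes x: "0 < x" "x < 1" and pos: "Ca > 0" "Ct > 0" "Na > 0" "\<sigma>2 > 0"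
    and l: "1 \<le> l" "l < J"
  shows "snr_gamma J Na x Ca Ct \<sigma>2 l \<le> snr_gamma J Na x Ca Ct \<sigma>2 (Suc l) \<longleftrightarrow>
      Ca * (x\<^sup>2) ^ (J - Suc l) \<le> Ct * (x\<^sup>2) ^ (l - 1)"
    and "snr_gamma J Na x Ca Ct \<sigma>2 (Suc l) \<le> snr_gamma J Na x Ca Ct \<sigma>2 l \<longleftrightarrow>
      Ct * (x\<^sup>2) ^ (l - 1) \<le> Ca * (x\<^sup>2) ^ (J - Suc l)"
proof -
  have factor: "\<sigma>2 * (1 - x\<^sup>2) > 0"
    using x pos by (simp add: power_less_one_iff)
  note gamma_le = snr_gamma_le_iff_snr_denom[OF _ pos]
  note diff = snr_denom_diff_Suc[OF l, of "x\<^sup>2" Ca Ct \<sigma>2]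
  have "snr_gamma J Na x Ca Ct \<sigma>2 l \<le> snr_gamma J Na x Ca Ct \<sigma>2 (Suc l) \<longleftrightarrow>
      0 \<le> \<sigma>2 * (1 - x\<^sup>2) * (Ct * (x\<^sup>2) ^ (l - 1) - Ca * (x\<^sup>2) ^ (J - Suc l))"
    using gamma_le x diff by auto
  then show "snr_gamma J Na x Ca Ct \<sigma>2 l \<le> snr_gamma J Na x Ca Ct \<sigma>2 (Suc l) \<longleftrightarrow>
      Ca * (x\<^sup>2) ^ (J - Suc l) \<le> Ct * (x\<^sup>2) ^ (l - 1)"
    using mult_le_cancel_left_pos[OF factor, of 0] by simp
  have "snr_gamma J Na x Ca Ct \<sigma>2 (Suc l) \<le> snr_gamma J Na x Ca Ct \<sigma>2 l \<longleftrightarrow>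
      \<sigma>2 * (1 - x\<^sup>2) * (Ct * (x\<^sup>2) ^ (l - 1) - Ca * (x\<^sup>2) ^ (J - Suc l)) \<le> 0"
    using gamma_le x diff by auto
  then show "snr_gamma J Na x Ca Ct \<sigma>2 (Suc l) \<le> snr_gamma J Na x Ca Ct \<sigma>2 l \<longleftrightarrow>
      Ct * (x\<^sup>2) ^ (l - 1) \<le> Ca * (x\<^sup>2) ^ (J - Suc l)"
    using mult_le_cancel_left_pos[OF factor, of _ 0] by simp
qed

text \<open>The paper's real maximiser lt, as a function of q = (Np kI)^2.\<close>
definition snr_peak :: "nat \<Rightarrow> real \<Rightarrow> real \<Rightarrow> real \<Rightarrow> real" where
  "snr_peak J q Ca Ct = (real J + 1) / 2 + ln (Ca / Ct) / (2 * ln q)"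

lemma le_snr_peak_iff:
  assumes "0 < q" "q < 1" "Ca > 0" "Ct > 0"
  shows "s \<le> snr_peak J q Ca Ct \<longleftrightarrow> ln Ca - ln Ct \<le> (2 * s - real J - 1) * ln q"
  using assms by (auto simp: snr_peak_def ln_divide_pos field_simps)

lemma snr_peak_le_iff:
  assumes "0 < q" "q < 1" "Ca > 0" "Ct > 0"
  shows "snr_peak J q Ca Ct \<le> s \<longleftrightarrow> (2 * s - real J - 1) * ln q \<le> ln Ca - ln Ct"
  using assms by (auto simp: snr_peak_def ln_divide_pos field_simps)

lemma snr_gamma_unimodal_peak:
  assumes x: "0 < x" "x < 1" and pos: "Ca > 0" "Ct > 0" "Na > 0" "\<sigma>2 > 0"
  shows "unimodal_peak (snr_gamma J Na x Ca Ct \<sigma>2) J (snr_peak J (x\<^sup>2) Ca Ct)"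
  unfolding unimodal_peak_def
proof (intro allI impI conjI)
  fix l assume l: "1 \<le> l" "l < J"
  have q: "0 < x\<^sup>2" "x\<^sup>2 < 1" using x by (auto simp: power_less_one_iff)
  have exps: "real (J - Suc l) = real J - real l - 1" "real (l - 1) = real l - 1"
    using l by (simp_all add: of_nat_diff)
  note step = snr_gamma_step_le_iff[OF x pos l]
  note mult_power = mult_power_le_iff_ln[OF _ _ q(1)]
  show "snr_gamma J Na x Ca Ct \<sigma>2 l \<le> snr_gamma J Na x Ca Ct \<sigma>2 (Suc l)"
    if "real l + 1/2 \<le> snr_peak J (x\<^sup>2) Ca Ct"
  proof -
    have "ln Ca - ln Ct \<le> (2 * real l - real J) * ln (x\<^sup>2)"
      using that unfolding le_snr_peak_iff[OF q pos(1,2)] by (simp add: algebra_simps)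
    then have "ln Ca + real (J - Suc l) * ln (x\<^sup>2) \<le> ln Ct + real (l - 1) * ln (x\<^sup>2)"
      unfolding exps by (simp add: algebra_simps)
    then show ?thesis unfolding step mult_power[OF pos(1,2)] .
  qed
  show "snr_gamma J Na x Ca Ct \<sigma>2 (Suc l) \<le> snr_gamma J Na x Ca Ct \<sigma>2 l"
    if "snr_peak J (x\<^sup>2) Ca Ct \<le> real l + 1/2"
  proof -
    have "(2 * real l - real J) * ln (x\<^sup>2) \<le> ln Ca - ln Ct"
      using that unfolding snr_peak_le_iff[OF q pos(1,2)] by (simp add: algebra_simps)
    then have "ln Ct + real (l - 1) * ln (x\<^sup>2) \<le> ln Ca + real (J - Suc l) * ln (x\<^sup>2)"
      unfolding exps by (simp add: algebra_simps)
    then show ?thesis unfolding step mult_power[OF pos(2,1)] .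
  qed
qed

lemma one_le_snr_peak:
  assumes "0 < q" "q < 1" "0 < Ca" "Ca \<le> Ct" "1 \<le> J"
  shows "1 \<le> snr_peak J q Ca Ct"
proof -
  have "ln Ca - ln Ct \<le> 0" using assms by simp
  also have "0 \<le> (2 * 1 - real J - 1) * ln q" using assms by (intro mult_nonpos_nonpos) auto
  finally show ?thesis using le_snr_peak_iff assms by simp
qed

lemma snr_peak_le_J:
  assumes "0 < q" "q < 1" "0 < Ct" "Ct \<le> Ca" "1 \<le> J"
  shows "snr_peak J q Ca Ct \<le> real J"
proof -
  have "(2 * real J - real J - 1) * ln q \<le> 0" using assms by (intro mult_nonneg_nonpos) auto
  also have "0 \<le> ln Ca - ln Ct" using assms by simp
  finally show ?thesis using snr_peak_le_iff assms by simp
qed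

lemma J_le_snr_peak_iff:
  assumes "0 < n" "0 < k" "n * k < 1" "0 < Ca" "0 < Ct" "2 \<le> J"
  shows "real J \<le> snr_peak J ((n * k)\<^sup>2) Ca Ct \<longleftrightarrow>
    (Ca / Ct) powr (1 / (2 * (real J - 1))) / k \<le> n"
proof -
  have q: "0 < (n * k)\<^sup>2" "(n * k)\<^sup>2 < 1"
    using assms by (auto simp: power_less_one_iff)
  have "real J \<le> snr_peak J ((n * k)\<^sup>2) Ca Ct \<longleftrightarrow>
      ln (Ca / Ct) \<le> 2 * (real J - 1) * ln (n * k)"
    unfolding le_snr_peak_iff[OF q assms(4,5)] ln_realpow
    using assms by (simp add: ln_divide_pos algebra_simps)
  also have "\<dots> \<longleftrightarrow> (Ca / Ct) powr (1 / (2 * (real J - 1))) / k \<le> n"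
    using assms by (intro powr_inverse_div_le_iff[symmetric]) auto
  finally show ?thesis .
qed

lemma snr_peak_le_1_iff:
  assumes "0 < n" "0 < k" "n * k < 1" "0 < Ca" "0 < Ct" "2 \<le> J"
  shows "snr_peak J ((n * k)\<^sup>2) Ca Ct \<le> 1 \<longleftrightarrow>
    (Ct / Ca) powr (1 / (2 * (real J - 1))) / k \<le> n"
proof -
  have q: "0 < (n * k)\<^sup>2" "(n * k)\<^sup>2 < 1"
    using assms by (auto simp: power_less_one_iff)
  have "snr_peak J ((n * k)\<^sup>2) Ca Ct \<le> 1 \<longleftrightarrow>
      ln (Ct / Ca) \<le> 2 * (real J - 1) * ln (n * k)"
    unfolding snr_peak_le_iff[OF q assms(4,5)] ln_realpow
    using assms by (simp add: ln_divide_pos algebra_simps)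
  also have "\<dots> \<longleftrightarrow> (Ct / Ca) powr (1 / (2 * (real J - 1))) / k \<le> n"
    using assms by (intro powr_inverse_div_le_iff[symmetric]) auto
  finally show ?thesis .
qed

theorem proposition1:
  fixes J Np Na :: nat and Pt Pa M \<kappa>B \<kappa>U \<kappa>I \<sigma>2 :: real
  assumes hJ: "J \<ge> 2" and hNp: "Np > 0" and hNa: "Na > 0"
    and pos: "Pt > 0" "Pa > 0" "M > 0" "\<kappa>B > 0" "\<kappa>U > 0" "\<kappa>I > 0" "\<sigma>2 > 0"
    and hlt: "real Np * \<kappa>I < 1"
  defines "Ca \<equiv> Pa * real Na * \<kappa>U ^ 2"
    and "Ct \<equiv> Pt * M * \<kappa>B ^ 2"
  defines "\<gamma> \<equiv> snr_gamma J (real Na) (real Np * \<kappa>I) Ca Ct \<sigma>2"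
    and "lt \<equiv> (real J + 1) / 2 + ln (Ca / Ct) / (2 * ln ((real Np)\<^sup>2 * \<kappa>I\<^sup>2))"
  shows
    "(Ca < Ct \<longrightarrow>
        (real Np < (Ca / Ct) powr (1 / (2 * (real J - 1))) / \<kappa>I \<longrightarrow>
           (\<forall>l. is_opt \<gamma> {nat \<lfloor>lt\<rfloor>, nat \<lceil>lt\<rceil>} l \<longrightarrow> is_opt \<gamma> {1..J} l)) \<and>
        ((Ca / Ct) powr (1 / (2 * (real J - 1))) / \<kappa>I \<le> real Np \<longrightarrow>
           is_opt \<gamma> {1..J} J)) \<and>
     (Ca = Ct \<longrightarrow>
        (\<forall>l. is_opt \<gamma> {nat \<lfloor>(real J + 1) / 2\<rfloor>, nat \<lceil>(real J + 1) / 2\<rceil>} l \<longrightarrow>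
             is_opt \<gamma> {1..J} l)) \<and>
     (Ca > Ct \<longrightarrow>
        (real Np < (Ct / Ca) powr (1 / (2 * (real J - 1))) / \<kappa>I \<longrightarrow>
           (\<forall>l. is_opt \<gamma> {nat \<lfloor>lt\<rfloor>, nat \<lceil>lt\<rceil>} l \<longrightarrow> is_opt \<gamma> {1..J} l)) \<and>
        ((Ct / Ca) powr (1 / (2 * (real J - 1))) / \<kappa>I \<le> real Np \<longrightarrow>
           is_opt \<gamma> {1..J} 1))"
proof -
  have n: "0 < real Np" using hNp by simp
  have x: "0 < real Np * \<kappa>I" "real Np * \<kappa>I < 1" using n pos hlt by auto
  have q: "0 < (real Np * \<kappa>I)\<^sup>2" "(real Np * \<kappa>I)\<^sup>2 < 1"
    using x hNp by (auto simp: power_less_one_iff)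
  have Ca: "Ca > 0" and Ct: "Ct > 0" unfolding Ca_def Ct_def using pos hNa by auto
  have lt: "lt = snr_peak J ((real Np * \<kappa>I)\<^sup>2) Ca Ct"
    unfolding lt_def snr_peak_def by (simp add: power_mult_distrib)
  have peak: "unimodal_peak \<gamma> J lt"
    unfolding \<gamma>_def lt using snr_gamma_unimodal_peak[OF x Ca Ct] hNp hNa pos by simp
  note J_le_lt = J_le_snr_peak_iff[OF n pos(6) hlt Ca Ct hJ, folded lt]
  note lt_le_1 = snr_peak_le_1_iff[OF n pos(6) hlt Ca Ct hJ, folded lt]
  show ?thesis
  proof (intro conjI impI allI)
    assume "Ca < Ct"
    then have "1 \<le> lt" unfolding lt using q Ca hJ by (intro one_le_snr_peak) auto
    show "is_opt \<gamma> {1..J} l" if "real Np < (Ca / Ct) powr (1 / (2 * (real J - 1))) / \<kappa>I"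
      and "is_opt \<gamma> {nat \<lfloor>lt\<rfloor>, nat \<lceil>lt\<rceil>} l" for l
      using unimodal_peak_is_opt_floor_ceiling[OF peak \<open>1 \<le> lt\<close> _ that(2)] that(1) J_le_lt
      by (metis linorder_linear not_le)
    show "is_opt \<gamma> {1..J} J" if "(Ca / Ct) powr (1 / (2 * (real J - 1))) / \<kappa>I \<le> real Np"
      using unimodal_peak_is_opt_last[OF peak] that J_le_lt hJ by simp
  next
    fix l assume "Ca = Ct" and opt: "is_opt \<gamma> {nat \<lfloor>(real J + 1) / 2\<rfloor>, nat \<lceil>(real J + 1) / 2\<rceil>} l"
    then have "lt = (real J + 1) / 2" unfolding lt_def using Ca by simp
    with peak have "unimodal_peak \<gamma> J ((real J + 1) / 2)" by simp
    then show "is_opt \<gamma> {1..J} l"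
      by (rule unimodal_peak_is_opt_floor_ceiling[OF _ _ _ opt]) (use hJ in auto)
  next
    assume "Ct < Ca"
    then have "lt \<le> real J" unfolding lt using q Ct hJ by (intro snr_peak_le_J) auto
    show "is_opt \<gamma> {1..J} l" if "real Np < (Ct / Ca) powr (1 / (2 * (real J - 1))) / \<kappa>I"
      and "is_opt \<gamma> {nat \<lfloor>lt\<rfloor>, nat \<lceil>lt\<rceil>} l" for l
      using unimodal_peak_is_opt_floor_ceiling[OF peak _ \<open>lt \<le> real J\<close> that(2)] that(1) lt_le_1
      by (metis linorder_linear not_le)
    show "is_opt \<gamma> {1..J} 1" if "(Ct / Ca) powr (1 / (2 * (real J - 1))) / \<kappa>I \<le> real Np"
      using unimodal_peak_is_opt_first[OF peak] that lt_le_1 hJ by simp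
  qed
qed

end
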